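(* Let $k\ge 1$ and let $L_i(m)=a_im+b_i$ ($i=1,\dots,k$) be an admissible $k$-tuple of linear forms. Suppose that for certain pairs $i\neq j$ there are relations $|c_{i,j}L_i-c_{j,i}L_j|=n_{i,j}$ with positive integers $c_{i,j},c_{j,i},n_{i,j}$. Let $r_1,\dots,r_k$ be positive integers such that $\gcd(r_i,a_i)=1$ for all $i$, and $\gcd(r_i,\det(L_i,L_j))=\gcd(r_i,r_j)=1$ whenever $i\neq j$. Then there is an admissible $k$-tuple of linear forms $K_1,\dots,K_k$ satisfying, for each of those pairs, the relations $|c_{i,j}r_iK_i-c_{j,i}r_jK_j|=n_{i,j}$.
   Context: A linear form is a polynomial $L(m)=am+b$ with $a,b\in\mathbb{Z}$ and $a>0$ (viewed both as a polynomial and as a function of $m$). For linear forms $L(m)=am+b$ and $K(m)=cm+d$, a relation between them is an identity of polynomials $|c_L L-c_K K|=n$ (i.e. $c_LL-c_KK$ is the constant polynomial $\pm n$) with $c_L,c_K,n$ positive integers; $c_L,c_K$ are the relation coefficients and $n$ the relation value. The determinant is $\det(L,K)=|ad-bc|$. For a prime $p$, a $k$-tuple $L_1,\dots,L_k$ is $p$-admissible if there is an integer $t_p$ with $L_1(t_p)\cdots L_k(t_p)\not\equiv 0 \pmod p$; it is admissible if it is $p$-admissible for every prime $p$. *)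

theory Defs
  imports "HOL-Computational_Algebra.Polynomial" "HOL-Computational_Algebra.Primes"
begin

text \<open>The linear form a m + b, as an integer polynomial (it is a linear form iff a > 0).\<close>
definition linform :: "int \<Rightarrow> int \<Rightarrow> int poly" where
  "linform a b = [:b, a:]"

definition relation :: "int \<Rightarrow> int poly \<Rightarrow> int \<Rightarrow> int poly \<Rightarrow> int \<Rightarrow> bool" where
  "relation cL L cK K n \<longleftrightarrow> cL > 0 \<and> cK > 0 \<and> n > 0 \<and>
     (smult cL L - smult cK K = [:n:] \<or> smult cL L - smult cK K = [:-n:])"

definition det_lf :: "int \<Rightarrow> int \<Rightarrow> int \<Rightarrow> int \<Rightarrow> int" where
  "det_lf a b c d = \<bar>a * d - b * c\<bar>"

definition p_admissible :: "int \<Rightarrow> nat \<Rightarrow> (nat \<Rightarrow> int) \<Rightarrow> (nat \<Rightarrow> int) \<Rightarrow> bool" where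
  "p_admissible p k a b \<longleftrightarrow>
     (\<exists>t::int. \<not> p dvd (\<Prod>i\<in>{1..k}. poly (linform (a i) (b i)) t))"

definition admissible :: "nat \<Rightarrow> (nat \<Rightarrow> int) \<Rightarrow> (nat \<Rightarrow> int) \<Rightarrow> bool" where
  "admissible k a b \<longleftrightarrow> (\<forall>p::int. prime p \<longrightarrow> p_admissible p k a b)"

end

theory Submission
  imports Defs "HOL-Number_Theory.Cong"
begin

(* Choose t with r_i dividing L_i(t) for all i (Chinese remainder theorem), put R = prod r_i and
   define K_i by r_i K_i(m) = L_i(R m + t); relations survive the substitution m -> R m + t.
   Admissibility at a prime p: if p does not divide R, the substitution is a bijection modulo p,
   so a good residue for the L_i yields one for the K_i.  If p divides R, it divides exactly one
   r_i0; then K_i0 is non-constant modulo p, while every other K_j is constant modulo p, and that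
   constant is nonzero, since otherwise p would divide both L_j(t) and L_i0(t), hence
   det(L_i0, L_j). *)

lemma poly_linform [simp]: "poly (linform a b) m = a * m + b"
  by (simp add: linform_def)

lemma smult_linform: "smult r (linform a b) = linform (r * a) (r * b)"
  by (simp add: linform_def)

lemma pcompose_linform: "pcompose (linform a b) (linform c d) = linform (a * c) (a * d + b)"
  by (simp add: linform_def pcompose_pCons algebra_simps)

lemma relation_pcompose_rescale:
  assumes "relation c L c' L' n" "r > 0" "r' > 0"
    and "smult r K = pcompose L q" "smult r' K' = pcompose L' q"
  shows "relation (c * r) K (c' * r') K' n"
proof -
  have "smult (c * r) K - smult (c' * r') K' = pcompose (smult c L - smult c' L') q"
    by (simp add: assms(4,5) pcompose_diff pcompose_smult flip: smult_smult)
  then show ?thesis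
    using assms(1-3) unfolding relation_def by auto
qed

lemma dvd_det_lf:
  assumes "p dvd a * t + b" "p dvd c * t + d"
  shows "p dvd det_lf a b c d"
proof -
  have "a * d - b * c = a * (c * t + d) - c * (a * t + b)"
    by (simp add: algebra_simps)
  then show ?thesis
    using assms unfolding det_lf_def by simp
qed

lemma linear_congruences_solvable:
  fixes a b r :: "nat \<Rightarrow> int"
  assumes "finite S" "\<forall>i\<in>S. coprime (a i) (r i)"
    and "\<forall>i\<in>S. \<forall>j\<in>S. i \<noteq> j \<longrightarrow> coprime (r i) (r j)"
  shows "\<exists>t. \<forall>i\<in>S. r i dvd a i * t + b i"
  using assms
proof (induction S rule: finite_induct)
  case empty
  then show ?case by simp
next
  case (insert j S)
  then obtain t where t: "\<forall>i\<in>S. r i dvd a i * t + b i" by auto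
  define M where "M = (\<Prod>i\<in>S. r i)"
  have "coprime (a j * M) (r j)"
    unfolding M_def using insert by (auto intro: prod_coprime_left)
  then obtain y where y: "[a j * M * y = 1] (mod r j)"
    using cong_solve_coprime_int by blast
  define t' where "t' = t - M * y * (a j * t + b j)"
  have "[a j * t' + b j = (a j * t + b j) * (1 - a j * M * y)] (mod r j)"
    unfolding t'_def by (simp add: algebra_simps)
  also have "[(a j * t + b j) * (1 - a j * M * y) = (a j * t + b j) * (1 - 1)] (mod r j)"
    by (intro cong_mult cong_diff cong_refl y)
  finally have "r j dvd a j * t' + b j"
    by (simp add: cong_0_iff)
  moreover have "r i dvd a i * t' + b i" if "i \<in> S" for i
  proof -
    have "r i dvd M"
      unfolding M_def using that insert by (simp add: dvd_prodI)
    then have "r i dvd (a i * t + b i) - a i * (M * y * (a j * t + b j))"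
      using t that by simp
    then show ?thesis
      unfolding t'_def by (simp add: algebra_simps)
  qed
  ultimately show ?case by auto
qed

lemma p_admissible_substitution:
  fixes a b a' b' :: "nat \<Rightarrow> int" and R t :: int
  assumes "prime p" "\<not> p dvd R" "p_admissible p k a b"
    and "\<forall>i\<in>{1..k}. \<forall>m. a' i * m + b' i dvd a i * (R * m + t) + b i"
  shows "p_admissible p k a' b'"
proof -
  obtain tp where tp: "\<not> p dvd (\<Prod>i\<in>{1..k}. a i * tp + b i)"
    using assms(3) unfolding p_admissible_def by auto
  have "coprime R p"
    using prime_imp_coprime[OF assms(1,2)] by (simp add: coprime_commute)
  then obtain x where x: "[R * x = 1] (mod p)"
    using cong_solve_coprime_int by blast
  define m where "m = x * (tp - t)"
  have "[R * m + t = 1 * (tp - t) + t] (mod p)"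
    unfolding m_def using x by (metis cong_add cong_mult cong_refl mult.assoc)
  then have "[(\<Prod>i\<in>{1..k}. a i * (R * m + t) + b i) = (\<Prod>i\<in>{1..k}. a i * tp + b i)] (mod p)"
    by (auto intro!: cong_prod cong_add cong_mult)
  then have "\<not> p dvd (\<Prod>i\<in>{1..k}. a i * (R * m + t) + b i)"
    using tp cong_dvd_iff by blast
  moreover have "(\<Prod>i\<in>{1..k}. a' i * m + b' i) dvd (\<Prod>i\<in>{1..k}. a i * (R * m + t) + b i)"
    using assms(4) by (intro prod_dvd_prod) blast
  ultimately show ?thesis
    unfolding p_admissible_def by (auto dest: dvd_trans)
qed

lemma p_admissible_one_nonconstant:
  fixes a b :: "nat \<Rightarrow> int"
  assumes "prime p" "i0 \<in> {1..k}" "\<not> p dvd a i0"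
    and "\<forall>j\<in>{1..k} - {i0}. p dvd a j \<and> \<not> p dvd b j"
  shows "p_admissible p k a b"
proof -
  \<comment> \<open>m = 0 works unless p divides b i0, and then m = 1 does\<close>
  obtain m where m: "\<not> p dvd a i0 * m + b i0"
    using assms(3) by (metis add.commute dvd_add_right_iff mult_1_right mult_zero_right add_0)
  have "\<not> p dvd a j * m + b j" if "j \<in> {1..k} - {i0}" for j
    using assms(4) that by (auto simp: dvd_add_right_iff)
  then have "\<not> p dvd (\<Prod>j\<in>{1..k} - {i0}. a j * m + b j)"
    using assms(1) by (simp add: prime_dvd_prod_iff)
  then have "\<not> p dvd (\<Prod>j\<in>{1..k}. a j * m + b j)"
    using assms(1,2) m by (simp add: prod.remove prime_dvd_mult_iff)
  then show ?thesis
    unfolding p_admissible_def by auto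
qed

lemma prime_not_dvd_coprime:
  fixes p :: int
  assumes "prime p" "p dvd x" "coprime x y"
  shows "\<not> p dvd y"
  using assms by (meson coprime_common_divisor not_prime_unit)

lemma p_admissible_rescaled_dvd_modulus:
  fixes a b r :: "nat \<Rightarrow> int" and t :: int
  assumes p: "prime p" and i0: "i0 \<in> {1..k}" "p dvd r i0"
    and roots: "\<forall>i\<in>{1..k}. r i dvd a i * t + b i"
    and coprime_a: "\<forall>i\<in>{1..k}. coprime (r i) (a i)"
    and coprime_pairs: "\<forall>i\<in>{1..k}. \<forall>j\<in>{1..k}. i \<noteq> j \<longrightarrow>
           coprime (r i) (det_lf (a i) (b i) (a j) (b j)) \<and> coprime (r i) (r j)"
  shows "p_admissible p k (\<lambda>i. a i * (\<Prod>j\<in>{1..k} - {i}. r j)) (\<lambda>i. (a i * t + b i) div r i)"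
proof (rule p_admissible_one_nonconstant[OF p i0(1)])
  note coprime_not_dvd = prime_not_dvd_coprime[OF p i0(2)]
  have "\<not> p dvd r j" if "j \<in> {1..k} - {i0}" for j
    using coprime_not_dvd coprime_pairs i0(1) that by auto
  then have "\<not> p dvd (\<Prod>j\<in>{1..k} - {i0}. r j)"
    using p by (simp add: prime_dvd_prod_iff)
  moreover have "\<not> p dvd a i0"
    using coprime_not_dvd coprime_a i0(1) by auto
  ultimately show "\<not> p dvd a i0 * (\<Prod>j\<in>{1..k} - {i0}. r j)"
    using p by (simp add: prime_dvd_mult_iff)
  show "\<forall>j\<in>{1..k} - {i0}. p dvd a j * (\<Prod>l\<in>{1..k} - {j}. r l) \<and> \<not> p dvd (a j * t + b j) div r j"
  proof (intro ballI conjI)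
    fix j
    assume j: "j \<in> {1..k} - {i0}"
    show "p dvd a j * (\<Prod>l\<in>{1..k} - {j}. r l)"
      using i0 j by (simp add: dvd_prodI dvd_mult[OF dvd_trans[OF i0(2)]])
    show "\<not> p dvd (a j * t + b j) div r j"
    proof
      assume "p dvd (a j * t + b j) div r j"
      then have "p dvd r j * ((a j * t + b j) div r j)"
        by simp
      then have "p dvd a j * t + b j"
        using roots j by simp
      moreover have "p dvd a i0 * t + b i0"
        using roots i0 by (metis dvd_trans)
      ultimately have "p dvd det_lf (a i0) (b i0) (a j) (b j)"
        by (rule dvd_det_lf[rotated])
      then show False
        using coprime_not_dvd coprime_pairs i0(1) j by auto
    qed
  qed
qed

lemma admissible_rescaled:
  fixes a b r :: "nat \<Rightarrow> int" and t :: int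
  assumes adm: "admissible k a b"
    and roots: "\<forall>i\<in>{1..k}. r i dvd a i * t + b i"
    and coprime_a: "\<forall>i\<in>{1..k}. coprime (r i) (a i)"
    and coprime_pairs: "\<forall>i\<in>{1..k}. \<forall>j\<in>{1..k}. i \<noteq> j \<longrightarrow>
           coprime (r i) (det_lf (a i) (b i) (a j) (b j)) \<and> coprime (r i) (r j)"
  shows "admissible k (\<lambda>i. a i * (\<Prod>j\<in>{1..k} - {i}. r j)) (\<lambda>i. (a i * t + b i) div r i)"
  unfolding admissible_def
proof (intro allI impI)
  fix p :: int
  assume p: "prime p"
  define R where "R = (\<Prod>j\<in>{1..k}. r j)"
  show "p_admissible p k (\<lambda>i. a i * (\<Prod>j\<in>{1..k} - {i}. r j)) (\<lambda>i. (a i * t + b i) div r i)"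
  proof (cases "p dvd R")
    case False
    have rescaled_dvd: "a i * (\<Prod>j\<in>{1..k} - {i}. r j) * m + (a i * t + b i) div r i
            dvd a i * (R * m + t) + b i" if "i \<in> {1..k}" for i m
    proof -
      have "R = r i * (\<Prod>j\<in>{1..k} - {i}. r j)"
        unfolding R_def using that by (simp add: prod.remove)
      moreover have "r i * ((a i * t + b i) div r i) = a i * t + b i"
        using roots that by simp
      ultimately have "r i * (a i * (\<Prod>j\<in>{1..k} - {i}. r j) * m + (a i * t + b i) div r i)
                   = a i * (R * m + t) + b i"
        by (simp only: ring_distribs mult_ac)
      then show ?thesis
        by (metis dvd_triv_right)
    qed
    have "p_admissible p k a b"
      using adm p unfolding admissible_def by blast
    then show ?thesis
      by (rule p_admissible_substitution[OF p False]) (use rescaled_dvd in blast)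
  next
    case True
    then obtain i0 where "i0 \<in> {1..k}" "p dvd r i0"
      using p unfolding R_def by (auto simp: prime_dvd_prod_iff)
    then show ?thesis
      using p_admissible_rescaled_dvd_modulus[OF p _ _ roots coprime_a coprime_pairs] by blast
  qed
qed

lemma rescaled_admissible_tuple_exists:
  fixes a b r :: "nat \<Rightarrow> int"
  assumes "\<forall>i\<in>{1..k}. a i > 0" "admissible k a b" "\<forall>i\<in>{1..k}. r i > 0"
    and "\<forall>i\<in>{1..k}. coprime (r i) (a i)"
    and "\<forall>i\<in>{1..k}. \<forall>j\<in>{1..k}. i \<noteq> j \<longrightarrow>
           coprime (r i) (det_lf (a i) (b i) (a j) (b j)) \<and> coprime (r i) (r j)"
  shows "\<exists>a' b' q. (\<forall>i\<in>{1..k}. a' i > 0) \<and> admissible k a' b' \<and>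
           (\<forall>i\<in>{1..k}. smult (r i) (linform (a' i) (b' i)) = pcompose (linform (a i) (b i)) q)"
proof -
  obtain t where roots: "\<forall>i\<in>{1..k}. r i dvd a i * t + b i"
    using linear_congruences_solvable[of "{1..k}" a r b] assms(4,5) by (auto simp: coprime_commute)
  define a' where "a' i = a i * (\<Prod>j\<in>{1..k} - {i}. r j)" for i
  define b' where "b' i = (a i * t + b i) div r i" for i
  have "\<forall>i\<in>{1..k}. a' i > 0"
    using assms(1,3) unfolding a'_def by (auto intro!: mult_pos_pos prod_pos)
  moreover have "admissible k a' b'"
    using admissible_rescaled[OF assms(2) roots assms(4,5)] unfolding a'_def b'_def .
  moreover have "smult (r i) (linform (a' i) (b' i))
                   = pcompose (linform (a i) (b i)) (linform (\<Prod>j\<in>{1..k}. r j) t)"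
    if "i \<in> {1..k}" for i
  proof -
    have "(\<Prod>j\<in>{1..k}. r j) = r i * (\<Prod>j\<in>{1..k} - {i}. r j)"
      using that by (simp add: prod.remove)
    then show ?thesis
      using roots that by (simp add: a'_def b'_def smult_linform pcompose_linform ac_simps)
  qed
  ultimately show ?thesis
    by blast
qed

theorem theorem2p2:
  fixes k :: nat and a b r :: "nat \<Rightarrow> int" and c n :: "nat \<Rightarrow> nat \<Rightarrow> int"
    and P :: "(nat \<times> nat) set"
  assumes "k \<ge> 1"
    and "\<forall>i\<in>{1..k}. a i > 0"
    and "admissible k a b"
    and "P \<subseteq> {(i, j). i \<in> {1..k} \<and> j \<in> {1..k} \<and> i \<noteq> j}"
    and "\<forall>(i, j)\<in>P. relation (c i j) (linform (a i) (b i)) (c j i) (linform (a j) (b j)) (n i j)"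
    and "\<forall>i\<in>{1..k}. r i > 0"
    and "\<forall>i\<in>{1..k}. gcd (r i) (a i) = 1"
    and "\<forall>i\<in>{1..k}. \<forall>j\<in>{1..k}. i \<noteq> j \<longrightarrow>
           gcd (r i) (det_lf (a i) (b i) (a j) (b j)) = 1 \<and> gcd (r i) (r j) = 1"
  shows "\<exists>a' b' :: nat \<Rightarrow> int. (\<forall>i\<in>{1..k}. a' i > 0) \<and> admissible k a' b' \<and>
           (\<forall>(i, j)\<in>P. relation (c i j * r i) (linform (a' i) (b' i))
                                 (c j i * r j) (linform (a' j) (b' j)) (n i j))"
proof -
  obtain a' b' q where pos: "\<forall>i\<in>{1..k}. a' i > 0" and adm: "admissible k a' b'"
    and compose: "\<forall>i\<in>{1..k}. smult (r i) (linform (a' i) (b' i)) = pcompose (linform (a i) (b i)) q"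
    using rescaled_admissible_tuple_exists[OF assms(2,3,6)] assms(7,8)
    by (auto simp: coprime_iff_gcd_eq_1)
  have "relation (c i j * r i) (linform (a' i) (b' i)) (c j i * r j) (linform (a' j) (b' j)) (n i j)"
    if "(i, j) \<in> P" for i j
    using that assms(4-6) compose by (intro relation_pcompose_rescale) auto
  then show ?thesis
    using pos adm by blast
qed

end
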